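(* Let $X$, $Y$ be Banach spaces with $Y$ continuously embedded in $X$, and let $G$ generate a $C_0$-semigroup $(S(t))_{t\ge0}$ on $X$ such that $S(t)Y\subseteq Y$ for every $t\ge0$. (i) For every $t\ge0$, $S(t)|_Y\in\mathcal B(Y)$. (ii) If $t\mapsto S(t)y$ is continuous from $[0,\infty)$ to $Y$ for every $y\in Y$, then $\{\|S(t)|_Y\|_{\mathcal B(Y)}:t\in[0,t_1]\}$ is bounded for every $t_1\in(0,\infty)$. (iii) Assume that $\{\|S(t)|_Y\|_{\mathcal B(Y)}:t\in[0,t_1]\}$ is bounded for every $t_1\in(0,\infty)$, and that there is $\eta:(0,\infty)\to(0,\infty)$ with $\eta(\delta)\to0$ as $\delta\to0^+$ such that for all $0\le s_0<s_1$ and $\varphi\in C([s_0,s_1],X)$, $\int_{s_0}^{s_1}S(s_1-s)\varphi(s)\,ds\in Y$ and $\|\int_{s_0}^{s_1}S(s_1-s)\varphi(s)\,ds\|_Y\le\eta(s_1-s_0)\|\varphi\|_{C([s_0,s_1],X)}$. Then for all $0\le s_0<s_1$ and every $\varphi\in C([s_0,s_1],X)$, the function $t\mapsto\int_{s_0}^tS(t-s)\varphi(s)\,ds$ is continuous from $[s_0,s_1]$ to $Y$. *)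

theory Defs
  imports "HOL-Analysis.Analysis"
begin

text \<open>A \<open>C\<^sub>0\<close>-semigroup of bounded linear operators on a Banach space,
  indexed by \<open>t \<ge> 0\<close> (values for negative \<open>t\<close> are irrelevant).\<close>
definition C0_semigroup :: "(real \<Rightarrow> 'x::banach \<Rightarrow> 'x) \<Rightarrow> bool" where
  "C0_semigroup S \<longleftrightarrow>
     (\<forall>t\<ge>0. bounded_linear (S t)) \<and>
     S 0 = id \<and>
     (\<forall>t\<ge>0. \<forall>s\<ge>0. S (t + s) = S t \<circ> S s) \<and>
     (\<forall>x. ((\<lambda>t. S t x) \<longlongrightarrow> x) (at_right 0))"

definition is_generator ::
    "(real \<Rightarrow> 'x::banach \<Rightarrow> 'x) \<Rightarrow> 'x set \<Rightarrow> ('x \<Rightarrow> 'x) \<Rightarrow> bool" where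
  "is_generator S D G \<longleftrightarrow>
     D = {x. \<exists>l. ((\<lambda>h. (1 / h) *\<^sub>R (S h x - x)) \<longlongrightarrow> l) (at_right 0)} \<and>
     (\<forall>x\<in>D. ((\<lambda>h. (1 / h) *\<^sub>R (S h x - x)) \<longlongrightarrow> G x) (at_right 0))"

definition generates_C0 ::
    "'x set \<Rightarrow> ('x::banach \<Rightarrow> 'x) \<Rightarrow> (real \<Rightarrow> 'x \<Rightarrow> 'x) \<Rightarrow> bool" where
  "generates_C0 D G S \<longleftrightarrow> C0_semigroup S \<and> is_generator S D G"

end

theory Submission
  imports Defs
begin

text \<open>
  (i) The restriction \<open>S(t)|\<^sub>Y\<close> is linear, and its graph is closed because \<open>Y\<close> embeds
  continuously into \<open>X\<close>, where \<open>S(t)\<close> is continuous; the closed graph theorem, a consequence of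
  Baire's theorem, makes it bounded.
  (ii) For \<open>t \<in> [0, t\<^sub>1]\<close> the orbits \<open>t \<mapsto> S(t) y\<close> are continuous in \<open>Y\<close>, hence bounded,
  and uniform boundedness gives a bound on the operator norms.
  (iii) For \<open>u(t) = \<integral>\<^sub>s\<^sub>0\<^sup>t S(t - s) \<phi>(s) ds\<close> the semigroup law gives
  \<open>u(t + h) - u(t) = S(t - s\<^sub>0) u\<^sub>h + \<integral>\<^sub>s\<^sub>0\<^sup>t S(t - s) (\<phi>(s + h) - \<phi>(s)) ds\<close>,
  where \<open>u\<^sub>h\<close> is the convolution over \<open>[s\<^sub>0, s\<^sub>0 + h]\<close>. In \<open>Y\<close> the first term is
  \<open>O(\<eta>(h))\<close>; the second is bounded by a constant times the modulus of continuity of \<open>\<phi>\<close>,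
  the constant coming from cutting \<open>[s\<^sub>0, t]\<close> into pieces on which \<open>\<eta> \<le> 1\<close>.
\<close>

section \<open>Baire category: uniform boundedness and closed graphs\<close>

lemma Baire_closed_cover_ball:
  fixes A :: "nat \<Rightarrow> 'a::banach set"
  assumes closed: "\<And>n. closed (A n)" and cover: "(\<Union>n. A n) = UNIV"
  obtains n x r where "r > 0" "ball x r \<subseteq> A n"
proof -
  have "\<exists>n. interior (A n) \<noteq> {}"
  proof (rule ccontr)
    assume "\<nexists>n. interior (A n) \<noteq> {}"
    then have "euclidean interior_of \<Union>(range A) = {}"
      by (intro Baire_category_alt) (auto simp: completely_metrizable_space_euclidean closed)
    then show False using cover by simp
  qed
  then obtain n x where "x \<in> interior (A n)" by blast
  then obtain r where "r > 0" "ball x r \<subseteq> A n"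
    using open_contains_ball interior_subset open_interior by (metis subset_trans)
  then show thesis using that by blast
qed

lemma onorm_le_if_norm_bounded_on_ball:
  assumes lin: "bounded_linear F" and r: "r > 0"
    and bounded: "\<And>x. x \<in> ball x0 r \<Longrightarrow> norm (F x) \<le> m"
  shows "onorm F \<le> 4 * m / r"
proof (rule onorm_bound)
  interpret L: bounded_linear F by fact
  have "norm (F x0) \<le> m" using bounded r by simp
  then have m: "m \<ge> 0" using norm_ge_zero order_trans by blast
  then show "0 \<le> 4 * m / r" using r by simp
  fix x
  show "norm (F x) \<le> 4 * m / r * norm x"
  proof (cases "x = 0")
    case True then show ?thesis by (simp add: L.zero)
  next
    case False
    define c where "c = r / (2 * norm x)"
    have c: "c > 0" "norm (c *\<^sub>R x) = r / 2" using False r by (simp_all add: c_def)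
    have "norm (F x0) \<le> m" "norm (F (x0 + c *\<^sub>R x)) \<le> m"
      using bounded r c(2) by (auto simp: dist_norm)
    then have "c * norm (F x) \<le> 2 * m"
      using norm_triangle_ineq4[of "F (x0 + c *\<^sub>R x)" "F x0"] c by (simp add: L.add L.scale)
    then have "norm (F x) \<le> 2 * m / c" using c by (simp add: field_simps)
    also have "\<dots> = 4 * m / r * norm x" using False r by (simp add: c_def field_simps)
    finally show ?thesis .
  qed
qed

theorem uniform_boundedness_principle:
  fixes F :: "'i \<Rightarrow> 'a::banach \<Rightarrow> 'b::real_normed_vector"
  assumes lin: "\<And>i. i \<in> I \<Longrightarrow> bounded_linear (F i)"
    and pointwise: "\<And>x. \<exists>B. \<forall>i\<in>I. norm (F i x) \<le> B"
  obtains M where "\<And>i. i \<in> I \<Longrightarrow> onorm (F i) \<le> M"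
proof -
  define A where "A n = {x. \<forall>i\<in>I. norm (F i x) \<le> real n}" for n
  have "closed (A n)" for n
  proof -
    have "A n = (\<Inter>i\<in>I. {x. norm (F i x) \<le> real n})" unfolding A_def by auto
    moreover have "closed {x. norm (F i x) \<le> real n}" if "i \<in> I" for i
      using lin[OF that] by (intro closed_Collect_le continuous_intros) (simp_all add: linear_continuous_on)
    ultimately show ?thesis by auto
  qed
  moreover have "x \<in> (\<Union>n. A n)" for x
  proof -
    obtain B where B: "\<forall>i\<in>I. norm (F i x) \<le> B" using pointwise by blast
    obtain n where "B \<le> real n" using real_arch_simple by blast
    then have "x \<in> A n" using B unfolding A_def by force
    then show ?thesis by blast
  qed
  then have "(\<Union>n. A n) = UNIV" by blast
  ultimately obtain n x0 r where "r > 0" and "ball x0 r \<subseteq> A n"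
    by (rule Baire_closed_cover_ball)
  then have "onorm (F i) \<le> 4 * real n / r" if "i \<in> I" for i
    using that lin unfolding A_def by (intro onorm_le_if_norm_bounded_on_ball) auto
  then show thesis using that by blast
qed

text \<open>The closures of the sublevel sets of \<open>\<parallel>T y\<parallel>\<close> cover the space, so by Baire one of them contains
  a ball; differences of its points approximate the small vectors.\<close>
lemma linear_approximately_bounded_on_ball:
  fixes T :: "'a::banach \<Rightarrow> 'b::real_normed_vector"
  assumes "linear T"
  obtains c r where "r > 0" "c \<ge> 0"
    "\<And>y e. norm y < r \<Longrightarrow> e > 0 \<Longrightarrow> \<exists>y'. norm (T y') \<le> c \<and> norm (y - y') < e"
proof -
  interpret L: linear T by fact
  define E where "E n = closure {y. norm (T y) \<le> real n}" for n
  have "closed (E n)" for n unfolding E_def by simp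
  moreover have "y \<in> (\<Union>n. E n)" for y
  proof -
    obtain n where "norm (T y) \<le> real n" using real_arch_simple by blast
    then have "y \<in> E n" unfolding E_def by (meson closure_subset mem_Collect_eq subsetD)
    then show ?thesis by blast
  qed
  then have "(\<Union>n. E n) = UNIV" by blast
  ultimately obtain n y0 r where r: "r > 0" and ball: "ball y0 r \<subseteq> E n"
    by (rule Baire_closed_cover_ball)
  have "\<exists>y'. norm (T y') \<le> 2 * n \<and> norm (y - y') < e"
    if y: "norm y < r" and e: "e > 0" for y e
  proof -
    have "y0 + y \<in> ball y0 r" "y0 \<in> ball y0 r" using y r by (simp_all add: dist_norm)
    then have "y0 + y \<in> E n" "y0 \<in> E n" using ball by blast+
    then have "\<exists>a\<in>{y. norm (T y) \<le> real n}. dist a (y0 + y) < e/2"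
      "\<exists>b\<in>{y. norm (T y) \<le> real n}. dist b y0 < e/2"
      unfolding E_def closure_approachable using e half_gt_zero by blast+
    then obtain a b where a: "norm (T a) \<le> n" "dist a (y0 + y) < e/2"
      and b: "norm (T b) \<le> n" "dist b y0 < e/2"
      unfolding mem_Collect_eq by blast
    have "norm (T (a - b)) \<le> 2 * n"
      using a b norm_triangle_ineq4[of "T a" "T b"] by (simp add: L.diff)
    moreover have "norm (y - (a - b)) < e"
    proof -
      have "y - (a - b) = (y0 + y - a) + (b - y0)" by (simp add: algebra_simps)
      then have "norm (y - (a - b)) \<le> norm (y0 + y - a) + norm (b - y0)"
        by (metis norm_triangle_ineq)
      moreover have "norm (y0 + y - a) < e/2" "norm (b - y0) < e/2"
        using a b by (simp_all add: dist_norm norm_minus_commute)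
      ultimately show ?thesis by linarith
    qed
    ultimately show ?thesis by blast
  qed
  then show thesis using that[of r "2 * n"] r by simp
qed

lemma linear_approximately_bounded_rescale:
  assumes lin: "linear T" and r: "r > 0"
    and ball: "\<And>y e. norm y < r \<Longrightarrow> e > 0 \<Longrightarrow> \<exists>y'. norm (T y') \<le> c \<and> norm (y - y') < e"
    and e: "e > 0"
  shows "\<exists>y'. norm (T y') \<le> 2 * c / r * norm y \<and> norm (y - y') < e"
proof (cases "y = 0")
  case True then show ?thesis using e lin by (intro exI[of _ 0]) (simp add: linear_0)
next
  case False
  define l where "l = r / (2 * norm y)"
  have l: "l > 0" "norm (l *\<^sub>R y) < r" using False r by (simp_all add: l_def)
  obtain y' where y': "norm (T y') \<le> c" "norm (l *\<^sub>R y - y') < l * e"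
    using ball[OF l(2), of "l * e"] l(1) e by (meson mult_pos_pos)
  have "norm (T (y' /\<^sub>R l)) = norm (T y') / l" using l(1) lin by (simp add: linear_scale field_simps)
  also have "\<dots> \<le> c / l" using y'(1) l(1) by (simp add: divide_right_mono)
  also have "\<dots> = 2 * c / r * norm y" using False r by (simp add: l_def field_simps)
  finally have "norm (T (y' /\<^sub>R l)) \<le> 2 * c / r * norm y" .
  moreover have "norm (y - y' /\<^sub>R l) < e"
  proof -
    have "y - y' /\<^sub>R l = (l *\<^sub>R y - y') /\<^sub>R l" using l(1) by (simp add: algebra_simps)
    then have "norm (y - y' /\<^sub>R l) = norm (l *\<^sub>R y - y') / l"
      using l(1) by (simp add: divide_inverse_commute)
    also have "\<dots> < e" using y'(2) l(1) by (simp add: divide_less_eq mult.commute)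
    finally show ?thesis .
  qed
  ultimately show ?thesis by blast
qed

text \<open>Approximating the successive residuals of \<open>y\<close> with errors \<open>\<parallel>y\<parallel> / 2\<^sup>k\<^sup>+\<^sup>1\<close>.\<close>
lemma approximately_bounded_series:
  fixes T :: "'a::real_normed_vector \<Rightarrow> 'b::real_normed_vector"
  assumes K: "K \<ge> 0" and "y \<noteq> 0"
    and approx: "\<And>y e. e > 0 \<Longrightarrow> \<exists>y'. norm (T y') \<le> K * norm y \<and> norm (y - y') < e"
  shows "\<exists>u. (\<lambda>m. \<Sum>k<m. u k) \<longlonglongrightarrow> y \<and> (\<forall>k. norm (T (u k)) \<le> K * norm y * (1/2) ^ k)"
proof -
  have "\<forall>y e. \<exists>y'. e > 0 \<longrightarrow> norm (T y') \<le> K * norm y \<and> norm (y - y') < e"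
    using approx by blast
  then obtain g where "\<forall>y e. e > 0 \<longrightarrow> norm (T (g y e)) \<le> K * norm y \<and> norm (y - g y e) < e"
    by metis
  then have g: "\<And>y e. e > 0 \<Longrightarrow> norm (T (g y e)) \<le> K * norm y \<and> norm (y - g y e) < e"
    by blast
  define ep where "ep k = norm y / 2 ^ Suc k" for k :: nat
  define e where "e = rec_nat y (\<lambda>k ek. ek - g ek (ep k))"
  define u where "u k = g (e k) (ep k)" for k
  have e0: "e 0 = y" and eSuc: "e (Suc k) = e k - u k" for k by (simp_all add: e_def u_def)
  have ep: "ep k > 0" for k using \<open>y \<noteq> 0\<close> by (simp add: ep_def)
  have e_bound: "norm (e k) \<le> norm y * (1/2) ^ k" for k
  proof (cases k)
    case (Suc m)
    have "norm (e (Suc m)) < ep m" using g[OF ep[of m], of "e m"] by (simp add: eSuc u_def)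
    then show ?thesis using Suc by (simp add: ep_def power_divide)
  qed (simp add: e0)
  have "e \<longlonglongrightarrow> 0"
  proof (rule tendsto_norm_zero_cancel, rule Lim_null_comparison)
    show "\<forall>\<^sub>F k in sequentially. norm (norm (e k)) \<le> norm y * (1/2) ^ k"
      using e_bound by simp
    show "(\<lambda>k. norm y * (1/2::real) ^ k) \<longlonglongrightarrow> 0"
      by (intro tendsto_mult_right_zero LIMSEQ_power_zero) simp
  qed
  then have "(\<lambda>m. y - e m) \<longlonglongrightarrow> y - 0" by (intro tendsto_intros)
  moreover have "(\<Sum>k<m. u k) = y - e m" for m
    by (induction m) (simp_all add: e0 eSuc)
  ultimately have "(\<lambda>m. \<Sum>k<m. u k) \<longlonglongrightarrow> y" by simp
  moreover have "norm (T (u k)) \<le> K * norm y * (1/2) ^ k" for k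
  proof -
    have "norm (T (u k)) \<le> K * norm (e k)" using g[OF ep[of k], of "e k"] by (simp add: u_def)
    also have "\<dots> \<le> K * (norm y * (1/2) ^ k)" by (rule mult_left_mono[OF e_bound K])
    finally show ?thesis by (simp add: mult.assoc)
  qed
  ultimately show ?thesis by blast
qed

lemma closed_graph_approximately_bounded:
  fixes T :: "'a::banach \<Rightarrow> 'b::banach"
  assumes lin: "linear T"
    and closed_graph: "\<And>y z f. f \<longlonglongrightarrow> y \<Longrightarrow> (\<lambda>n. T (f n)) \<longlonglongrightarrow> z \<Longrightarrow> T y = z"
    and K: "K \<ge> 0"
    and approx: "\<And>y e. e > 0 \<Longrightarrow> \<exists>y'. norm (T y') \<le> K * norm y \<and> norm (y - y') < e"
  shows "norm (T y) \<le> 2 * K * norm y"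
proof (cases "y = 0")
  case True then show ?thesis using lin by (simp add: linear_0)
next
  case False
  then obtain u where sum_u: "(\<lambda>m. \<Sum>k<m. u k) \<longlonglongrightarrow> y"
    and Tu_bound: "\<And>k. norm (T (u k)) \<le> K * norm y * (1/2) ^ k"
    using approximately_bounded_series[OF K False approx] by blast
  have geom: "summable (\<lambda>k. K * norm y * (1/2::real) ^ k)"
    by (intro summable_mult complete_algebra_summable_geometric) simp
  have summable_Tu: "summable (\<lambda>k. norm (T (u k)))"
    by (rule summable_comparison_test[OF _ geom]) (use Tu_bound in auto)
  then have "summable (\<lambda>k. T (u k))" by (rule summable_norm_cancel)
  then have "(\<lambda>m. \<Sum>k<m. T (u k)) \<longlonglongrightarrow> (\<Sum>k. T (u k))"
    using summable_LIMSEQ by blast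
  then have "(\<lambda>m. T (\<Sum>k<m. u k)) \<longlonglongrightarrow> (\<Sum>k. T (u k))" by (simp add: linear_sum[OF lin])
  then have "T y = (\<Sum>k. T (u k))" by (rule closed_graph[OF sum_u])
  then have "norm (T y) \<le> (\<Sum>k. norm (T (u k)))" using summable_norm[OF summable_Tu] by simp
  also have "\<dots> \<le> (\<Sum>k. K * norm y * (1/2::real) ^ k)"
    by (rule suminf_le[OF _ summable_Tu geom]) (use Tu_bound in auto)
  also have "\<dots> = K * norm y * 2"
    by (simp add: suminf_mult suminf_geometric)
  finally show ?thesis by simp
qed

theorem closed_graph_theorem:
  fixes T :: "'a::banach \<Rightarrow> 'b::banach"
  assumes lin: "linear T"
    and closed_graph: "\<And>y z f. f \<longlonglongrightarrow> y \<Longrightarrow> (\<lambda>n. T (f n)) \<longlonglongrightarrow> z \<Longrightarrow> T y = z"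
  shows "bounded_linear T"
proof -
  obtain c r where r: "r > 0" and c: "c \<ge> 0"
    and ball: "\<And>y e. norm y < r \<Longrightarrow> e > 0 \<Longrightarrow> \<exists>y'. norm (T y') \<le> c \<and> norm (y - y') < e"
    by (rule linear_approximately_bounded_on_ball[OF lin]) blast
  define K where "K = 2 * c / r"
  have K: "K \<ge> 0" using r c by (simp add: K_def)
  have approx: "\<exists>y'. norm (T y') \<le> K * norm y \<and> norm (y - y') < e" if "e > 0" for y e
    unfolding K_def by (rule linear_approximately_bounded_rescale[OF lin r ball that])
  show ?thesis
  proof (rule bounded_linear_intro)
    show "T (x + y) = T x + T y" for x y by (rule linear_add[OF lin])
    show "T (a *\<^sub>R x) = a *\<^sub>R T x" for a x by (rule linear_scale[OF lin])
    show "norm (T x) \<le> norm x * (2 * K)" for x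
      using closed_graph_approximately_bounded[OF lin closed_graph K approx]
      by (simp add: algebra_simps)
  qed
qed

section \<open>\<open>C\<^sub>0\<close>-semigroups\<close>

lemma C0_semigroup_bounded_linear: "C0_semigroup S \<Longrightarrow> t \<ge> 0 \<Longrightarrow> bounded_linear (S t)"
  unfolding C0_semigroup_def by blast

lemma C0_semigroup_add:
  "C0_semigroup S \<Longrightarrow> t \<ge> 0 \<Longrightarrow> s \<ge> 0 \<Longrightarrow> S (t + s) x = S t (S s x)"
  unfolding C0_semigroup_def by (metis comp_apply)

lemma C0_semigroup_0: "C0_semigroup S \<Longrightarrow> S 0 x = x"
  unfolding C0_semigroup_def by simp

lemma C0_semigroup_diff: "C0_semigroup S \<Longrightarrow> t \<ge> 0 \<Longrightarrow> S t (x - y) = S t x - S t y"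
  by (rule linear_diff[OF bounded_linear.linear[OF C0_semigroup_bounded_linear]])

lemma C0_semigroup_near_0:
  assumes sg: "C0_semigroup S" and "e > 0"
  obtains d where "d > 0" "\<And>h. 0 \<le> h \<Longrightarrow> h < d \<Longrightarrow> norm (S h x - x) < e"
proof -
  have "((\<lambda>h. S h x) \<longlongrightarrow> x) (at_right 0)" using sg unfolding C0_semigroup_def by blast
  then have "eventually (\<lambda>h. dist (S h x) x < e) (at_right 0)" using \<open>e > 0\<close> by (rule tendstoD)
  then obtain d where d: "d > 0" "\<And>h. 0 < h \<Longrightarrow> h < d \<Longrightarrow> dist (S h x) x < e"
    unfolding eventually_at_right[OF zero_less_one] by auto
  have "norm (S h x - x) < e" if "0 \<le> h" "h < d" for h
  proof (cases "h = 0")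
    case True then show ?thesis using C0_semigroup_0[OF sg] \<open>e > 0\<close> by simp
  next
    case False then show ?thesis using d(2)[of h] that by (simp add: dist_norm)
  qed
  then show thesis using that d(1) by blast
qed

lemma C0_semigroup_tendsto_0:
  assumes sg: "C0_semigroup S" and t: "\<And>n. t n \<ge> 0" "t \<longlonglongrightarrow> 0"
  shows "(\<lambda>n. S (t n) x) \<longlonglongrightarrow> x"
proof (rule LIMSEQ_I)
  fix r :: real assume "r > 0"
  then obtain d where d: "d > 0" "\<And>h. 0 \<le> h \<Longrightarrow> h < d \<Longrightarrow> norm (S h x - x) < r"
    using C0_semigroup_near_0[OF sg] by blast
  then obtain N where N: "\<forall>n\<ge>N. norm (t n - 0) < d" using LIMSEQ_D[OF t(2)] by blast
  have "norm (S (t n) x - x) < r" if "n \<ge> N" for n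
    using d(2)[OF t(1)] N that by (simp add: abs_less_iff)
  then show "\<exists>N. \<forall>n\<ge>N. norm (S (t n) x - x) < r" by blast
qed

text \<open>Otherwise there are \<open>t\<^sub>n \<rightarrow> 0\<close> with \<open>\<parallel>S t\<^sub>n\<parallel> > n\<close>, although every orbit \<open>S t\<^sub>n x\<close>
  converges, contradicting uniform boundedness.\<close>
lemma C0_semigroup_onorm_bounded_near_0:
  fixes S :: "real \<Rightarrow> 'x::banach \<Rightarrow> 'x"
  assumes sg: "C0_semigroup S"
  obtains d M where "d > 0" "\<And>t. t \<in> {0..d} \<Longrightarrow> onorm (S t) \<le> M"
proof (rule ccontr)
  assume no_bound: "\<not> thesis"
  have "\<forall>n::nat. \<exists>t. t \<in> {0..inverse (real (Suc n))} \<and> onorm (S t) > real n"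
  proof
    fix n :: nat
    show "\<exists>t. t \<in> {0..inverse (real (Suc n))} \<and> onorm (S t) > real n"
    proof (rule ccontr)
      assume "\<nexists>t. t \<in> {0..inverse (real (Suc n))} \<and> onorm (S t) > real n"
      then have "thesis" by (intro that[of "inverse (real (Suc n))" "real n"]) (auto simp: not_less)
      then show False using no_bound by simp
    qed
  qed
  then obtain t where t: "\<And>n. t n \<in> {0..inverse (real (Suc n))}" "\<And>n. onorm (S (t n)) > real n"
    by metis
  have "t \<longlonglongrightarrow> 0"
    using t(1) by (intro tendsto_sandwich[OF _ _ tendsto_const LIMSEQ_inverse_real_of_nat]) auto
  then have "Bseq (\<lambda>n. S (t n) x)" for x
    using C0_semigroup_tendsto_0[OF sg] t(1) by (intro convergent_imp_Bseq convergentI) auto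
  then have "\<exists>B. \<forall>n\<in>UNIV. norm (S (t n) x) \<le> B" for x
    by (meson BseqD UNIV_I)
  moreover have "bounded_linear (S (t n))" for n
    using C0_semigroup_bounded_linear[OF sg] t(1)[of n] by simp
  ultimately obtain M where M: "\<And>n. n \<in> UNIV \<Longrightarrow> onorm (S (t n)) \<le> M"
    using uniform_boundedness_principle[of UNIV "\<lambda>n. S (t n)"] by blast
  obtain n :: nat where "M < real n" using reals_Archimedean2 by blast
  then show False using t(2)[of n] M[of n] by simp
qed

lemma C0_semigroup_onorm_le_power:
  assumes sg: "C0_semigroup S" and M1: "M \<ge> 1" and d: "d \<ge> 0"
    and Md: "\<And>t. t \<in> {0..d} \<Longrightarrow> onorm (S t) \<le> M"
  shows "t \<in> {0..real (Suc n) * d} \<Longrightarrow> onorm (S t) \<le> M ^ Suc n"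
proof (induction n arbitrary: t)
  case 0 then show ?case using Md by simp
next
  case (Suc n)
  show ?case
  proof (cases "t \<le> d")
    case True
    then have "onorm (S t) \<le> M" using Md Suc.prems by simp
    also have "\<dots> \<le> M ^ Suc (Suc n)" using power_increasing[of 1 "Suc (Suc n)" M] M1 by simp
    finally show ?thesis .
  next
    case False
    have "S t = S d \<circ> S (t - d)"
    proof
      fix v show "S t v = (S d \<circ> S (t - d)) v"
        using C0_semigroup_add[OF sg, of d "t - d" v] d False by simp
    qed
    then have "onorm (S t) \<le> onorm (S d) * onorm (S (t - d))"
      using C0_semigroup_bounded_linear[OF sg] d False by (simp add: onorm_compose)
    also have "\<dots> \<le> M * M ^ Suc n"
    proof (rule mult_mono)
      show "onorm (S d) \<le> M" using Md d by simp
      show "onorm (S (t - d)) \<le> M ^ Suc n"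
        using Suc.IH Suc.prems False by (simp add: algebra_simps)
      show "0 \<le> M" using M1 by simp
      show "0 \<le> onorm (S (t - d))"
        using C0_semigroup_bounded_linear[OF sg] False d by (intro onorm_pos_le) simp
    qed
    finally show ?thesis by simp
  qed
qed

lemma C0_semigroup_onorm_bounded:
  fixes S :: "real \<Rightarrow> 'x::banach \<Rightarrow> 'x"
  assumes sg: "C0_semigroup S"
  obtains M where "M \<ge> 1" "\<And>t. t \<in> {0..t1} \<Longrightarrow> onorm (S t) \<le> M"
proof -
  obtain d M0 where d: "d > 0" and M0: "\<And>t. t \<in> {0..d} \<Longrightarrow> onorm (S t) \<le> M0"
    using C0_semigroup_onorm_bounded_near_0[OF sg] by blast
  define M where "M = max 1 M0"
  have M1: "M \<ge> 1" by (simp add: M_def)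
  have Md: "onorm (S t) \<le> M" if "t \<in> {0..d}" for t
    using M0[OF that] by (simp add: M_def)
  obtain n :: nat where "t1 / d < real n" using reals_Archimedean2 by blast
  then have "t1 \<le> real (Suc n) * d" using d by (simp add: field_simps)
  then have "onorm (S t) \<le> M ^ Suc n" if "t \<in> {0..t1}" for t
    using that by (intro C0_semigroup_onorm_le_power[OF sg M1 _ Md]) (use d in auto)
  moreover have "M ^ Suc n \<ge> 1" using one_le_power[OF M1] .
  ultimately show thesis using that by blast
qed

lemma C0_semigroup_norm_bounded:
  fixes S :: "real \<Rightarrow> 'x::banach \<Rightarrow> 'x"
  assumes sg: "C0_semigroup S"
  obtains M where "M \<ge> 1" "\<And>t x. t \<in> {0..t1} \<Longrightarrow> norm (S t x) \<le> M * norm x"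
proof -
  obtain M where M1: "M \<ge> 1" and M: "\<And>t. t \<in> {0..t1} \<Longrightarrow> onorm (S t) \<le> M"
    using C0_semigroup_onorm_bounded[OF sg] by blast
  have "norm (S t x) \<le> M * norm x" if t: "t \<in> {0..t1}" for t x
  proof -
    have "norm (S t x) \<le> onorm (S t) * norm x"
      using t by (intro onorm C0_semigroup_bounded_linear[OF sg]) simp
    also have "\<dots> \<le> M * norm x" using M[OF t] by (rule mult_right_mono) simp
    finally show ?thesis .
  qed
  then show thesis using that M1 by blast
qed

lemma C0_semigroup_continuous_on:
  fixes S :: "real \<Rightarrow> 'x::banach \<Rightarrow> 'x"
  assumes sg: "C0_semigroup S"
  shows "continuous_on {0..} (\<lambda>t. S t x)"
  unfolding continuous_on_iff
proof (intro ballI allI impI)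
  fix t0 e :: real assume t0: "t0 \<in> {0..}" and e: "e > 0"
  obtain M where M1: "M \<ge> 1" and M: "\<And>t x. t \<in> {0..t0 + 1} \<Longrightarrow> norm (S t x) \<le> M * norm x"
    using C0_semigroup_norm_bounded[OF sg] by blast
  obtain d where d: "d > 0" "\<And>h. 0 \<le> h \<Longrightarrow> h < d \<Longrightarrow> norm (S h x - x) < e / M"
    using C0_semigroup_near_0[OF sg, of "e / M"] e M1 by auto
  text \<open>The later of \<open>S t x\<close>, \<open>S t0 x\<close> is the earlier one applied to \<open>S h x\<close>, \<open>h = \<bar>t - t0\<bar>\<close>.\<close>
  have "norm (S t x - S t0 x) < e" if t: "t \<ge> 0" "\<bar>t - t0\<bar> < min d 1" for t
  proof -
    define a where "a = min t t0"
    define h where "h = \<bar>t - t0\<bar>"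
    have a: "a \<in> {0..t0 + 1}" and h: "0 \<le> h" "h < d" using t t0 by (auto simp: a_def h_def)
    have "norm (S t x - S t0 x) = norm (S a (S h x) - S a x)"
    proof (cases "t0 \<le> t")
      case True
      then have "S t x = S a (S h x)" "t0 = a"
        using C0_semigroup_add[OF sg, of t0 "t - t0" x] t0 by (simp_all add: a_def h_def)
      then show ?thesis by simp
    next
      case False
      then have "S t0 x = S a (S h x)" "t = a"
        using C0_semigroup_add[OF sg, of t "t0 - t" x] t by (simp_all add: a_def h_def)
      then show ?thesis by (simp add: norm_minus_commute)
    qed
    also have "\<dots> = norm (S a (S h x - x))" using C0_semigroup_diff[OF sg] a by simp
    also have "\<dots> \<le> M * norm (S h x - x)" using M a by blast
    also have "\<dots> < M * (e / M)" using d(2)[OF h] M1 by (intro mult_strict_left_mono) auto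
    finally show ?thesis using M1 by simp
  qed
  then show "\<exists>d>0. \<forall>t\<in>{0..}. dist t t0 < d \<longrightarrow> dist (S t x) (S t0 x) < e"
    using d(1) by (intro exI[of _ "min d 1"]) (auto simp: dist_norm)
qed

lemma C0_semigroup_convolution_integrand_continuous:
  fixes S :: "real \<Rightarrow> 'x::banach \<Rightarrow> 'x"
  assumes sg: "C0_semigroup S" and cont: "continuous_on {a..b} \<psi>"
  shows "continuous_on {a..b} (\<lambda>r. S (b - r) (\<psi> r))"
  unfolding continuous_on_iff
proof (intro ballI allI impI)
  fix r0 e :: real assume r0: "r0 \<in> {a..b}" and e: "e > 0"
  obtain M where M1: "M \<ge> 1" and M: "\<And>t x. t \<in> {0..b - a} \<Longrightarrow> norm (S t x) \<le> M * norm x"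
    using C0_semigroup_norm_bounded[OF sg] by blast
  have "continuous_on {a..b} (\<lambda>r. S (b - r) (\<psi> r0))"
    by (rule continuous_on_compose2[OF C0_semigroup_continuous_on[OF sg]])
      (auto intro!: continuous_intros)
  then obtain d1 where d1: "d1 > 0"
    "\<forall>r\<in>{a..b}. dist r r0 < d1 \<longrightarrow> dist (S (b - r) (\<psi> r0)) (S (b - r0) (\<psi> r0)) < e / 2"
    using continuous_on_iff[THEN iffD1, rule_format, OF _ r0, of _ "e / 2"] e by auto
  obtain d2 where d2: "d2 > 0" "\<forall>r\<in>{a..b}. dist r r0 < d2 \<longrightarrow> dist (\<psi> r) (\<psi> r0) < e / (2 * M)"
    using continuous_on_iff[THEN iffD1, OF cont, rule_format, OF r0, of "e / (2 * M)"] e M1 by auto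
  have "dist (S (b - r) (\<psi> r)) (S (b - r0) (\<psi> r0)) < e"
    if r: "r \<in> {a..b}" "dist r r0 < min d1 d2" for r
  proof -
    have "S (b - r) (\<psi> r) - S (b - r0) (\<psi> r0)
        = S (b - r) (\<psi> r - \<psi> r0) + (S (b - r) (\<psi> r0) - S (b - r0) (\<psi> r0))"
      using C0_semigroup_diff[OF sg, of "b - r"] r by auto
    then have "norm (S (b - r) (\<psi> r) - S (b - r0) (\<psi> r0))
        \<le> norm (S (b - r) (\<psi> r - \<psi> r0)) + norm (S (b - r) (\<psi> r0) - S (b - r0) (\<psi> r0))"
      by (metis norm_triangle_ineq)
    moreover have "norm (S (b - r) (\<psi> r - \<psi> r0)) < e / 2"
    proof -
      have "norm (S (b - r) (\<psi> r - \<psi> r0)) \<le> M * norm (\<psi> r - \<psi> r0)" using M r by auto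
      also have "\<dots> < M * (e / (2 * M))"
        using d2 r M1 by (intro mult_strict_left_mono) (auto simp: dist_norm)
      finally show ?thesis using M1 by simp
    qed
    moreover have "norm (S (b - r) (\<psi> r0) - S (b - r0) (\<psi> r0)) < e / 2"
      using d1 r by (auto simp: dist_norm)
    ultimately show ?thesis by (simp add: dist_norm)
  qed
  then show "\<exists>d>0. \<forall>r\<in>{a..b}. dist r r0 < d \<longrightarrow> dist (S (b - r) (\<psi> r)) (S (b - r0) (\<psi> r0)) < e"
    using d1 d2 by (intro exI[of _ "min d1 d2"]) auto
qed

section \<open>Restrictions to an invariant subspace and convolutions\<close>

lemma inv_linear_add:
  assumes j: "linear j" "inj j" and "u \<in> range j" "v \<in> range j"
  shows "inv j (u + v) = inv j u + inv j v"
proof -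
  obtain a b where "u = j a" "v = j b" using assms by blast
  then show ?thesis by (simp add: linear_add[OF j(1), symmetric] inv_f_f[OF j(2)])
qed

lemma inv_linear_diff:
  assumes j: "linear j" "inj j" and "u \<in> range j" "v \<in> range j"
  shows "inv j (u - v) = inv j u - inv j v"
proof -
  obtain a b where "u = j a" "v = j b" using assms by blast
  then show ?thesis by (simp add: linear_diff[OF j(1), symmetric] inv_f_f[OF j(2)])
qed

theorem bounded_linear_restriction:
  fixes j :: "'y::banach \<Rightarrow> 'x::banach"
  assumes j: "bounded_linear j" "inj j" and A: "bounded_linear A"
    and invariant: "A ` range j \<subseteq> range j"
  shows "bounded_linear (\<lambda>y. inv j (A (j y)))"
proof -
  interpret J: bounded_linear j by fact
  interpret A: bounded_linear A by fact
  let ?T = "\<lambda>y. inv j (A (j y))"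
  have jT: "j (?T y) = A (j y)" for y
    using invariant by (intro f_inv_into_f) blast
  have "linear ?T"
  proof (rule linearI)
    show "?T (a + b) = ?T a + ?T b" for a b
    proof (rule injD[OF j(2)])
      have "j (?T (a + b)) = A (j (a + b))" by (rule jT)
      then show "j (?T (a + b)) = j (?T a + ?T b)" by (simp add: J.add A.add jT)
    qed
    show "?T (c *\<^sub>R a) = c *\<^sub>R ?T a" for c a
    proof (rule injD[OF j(2)])
      have "j (?T (c *\<^sub>R a)) = A (j (c *\<^sub>R a))" by (rule jT)
      then show "j (?T (c *\<^sub>R a)) = j (c *\<^sub>R ?T a)" by (simp add: J.scale A.scale jT)
    qed
  qed
  then show ?thesis
  proof (rule closed_graph_theorem)
    fix y z and f :: "nat \<Rightarrow> 'y"
    assume f: "f \<longlonglongrightarrow> y" and Tf: "(\<lambda>n. ?T (f n)) \<longlonglongrightarrow> z"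
    have "(\<lambda>n. A (j (f n))) \<longlonglongrightarrow> A (j y)" by (intro A.tendsto J.tendsto f)
    moreover have "(\<lambda>n. j (?T (f n))) \<longlonglongrightarrow> j z" by (intro J.tendsto Tf)
    then have "(\<lambda>n. A (j (f n))) \<longlonglongrightarrow> j z" by (simp add: jT)
    ultimately have "j (?T y) = j z" by (simp add: jT LIMSEQ_unique)
    then show "?T y = z" by (rule injD[OF j(2)])
  qed
qed

lemma strongly_continuous_onorm_bounded:
  fixes T :: "'i::topological_space \<Rightarrow> 'y::banach \<Rightarrow> 'z::real_normed_vector"
  assumes "compact K" and lin: "\<And>t. t \<in> K \<Longrightarrow> bounded_linear (T t)"
    and cont: "\<And>y. continuous_on K (\<lambda>t. T t y)"
  shows "bounded ((\<lambda>t. onorm (T t)) ` K)"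
proof -
  have "\<exists>B. \<forall>t\<in>K. norm (T t y) \<le> B" for y
    using compact_imp_bounded[OF compact_continuous_image[OF cont \<open>compact K\<close>]]
    unfolding bounded_iff by auto
  then obtain M where "\<And>t. t \<in> K \<Longrightarrow> onorm (T t) \<le> M"
    using uniform_boundedness_principle[of K T] lin by blast
  moreover have "onorm (T t) \<ge> 0" if "t \<in> K" for t
    using lin[OF that] by (rule onorm_pos_le)
  ultimately show ?thesis unfolding bounded_iff by (intro exI[of _ M]) auto
qed

abbreviation sg_conv :: "(real \<Rightarrow> 'x \<Rightarrow> 'x) \<Rightarrow> real \<Rightarrow> real \<Rightarrow> (real \<Rightarrow> 'x) \<Rightarrow> 'x::banach"
  where "sg_conv S a b \<psi> \<equiv> integral {a..b} (\<lambda>r. S (b - r) (\<psi> r))"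

lemma sg_conv_integrable:
  fixes S :: "real \<Rightarrow> 'x::banach \<Rightarrow> 'x"
  assumes "C0_semigroup S" "continuous_on {a..b} \<psi>"
  shows "(\<lambda>r. S (b - r) (\<psi> r)) integrable_on {a..b}"
  by (rule integrable_continuous_interval[OF C0_semigroup_convolution_integrand_continuous[OF assms]])

lemma sg_conv_split:
  fixes S :: "real \<Rightarrow> 'x::banach \<Rightarrow> 'x"
  assumes sg: "C0_semigroup S" and "a \<le> c" "c \<le> b" and cont: "continuous_on {a..b} \<psi>"
  shows "sg_conv S a b \<psi> = S (b - c) (sg_conv S a c \<psi>) + sg_conv S c b \<psi>"
proof -
  have cont_ac: "continuous_on {a..c} \<psi>"
    using cont by (rule continuous_on_subset) (use assms in auto)
  have "integral {a..c} (\<lambda>r. S (b - r) (\<psi> r)) = integral {a..c} (\<lambda>r. S (b - c) (S (c - r) (\<psi> r)))"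
  proof (rule integral_cong)
    fix r assume "r \<in> {a..c}"
    then show "S (b - r) (\<psi> r) = S (b - c) (S (c - r) (\<psi> r))"
      using C0_semigroup_add[OF sg, of "b - c" "c - r" "\<psi> r"] assms by simp
  qed
  also have "\<dots> = S (b - c) (sg_conv S a c \<psi>)"
    by (rule integral_linear[OF sg_conv_integrable[OF sg cont_ac]
          C0_semigroup_bounded_linear[OF sg], unfolded o_def]) (use assms in simp)
  finally have "integral {a..c} (\<lambda>r. S (b - r) (\<psi> r)) = S (b - c) (sg_conv S a c \<psi>)" .
  then show ?thesis
    using Henstock_Kurzweil_Integration.integral_combine[OF assms(2,3) sg_conv_integrable[OF sg cont]]
    by simp
qed

lemma sg_conv_shift: "sg_conv S (a + h) (b + h) \<psi> = sg_conv S a b (\<lambda>r. \<psi> (r + h))"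
proof -
  have "sg_conv S a b (\<lambda>r. \<psi> (r + h)) = integral {a..b} ((\<lambda>r. S (b + h - r) (\<psi> r)) \<circ> (+) h)"
    by (rule integral_cong) (simp add: algebra_simps)
  also have "\<dots> = sg_conv S (a + h) (b + h) \<psi>" by (rule integral_shift_Icc_real)
  finally show ?thesis by simp
qed

lemma sg_conv_diff:
  fixes S :: "real \<Rightarrow> 'x::banach \<Rightarrow> 'x"
  assumes sg: "C0_semigroup S"
    and cont: "continuous_on {a..b} \<psi>\<^sub>1" "continuous_on {a..b} \<psi>\<^sub>2"
  shows "sg_conv S a b \<psi>\<^sub>1 - sg_conv S a b \<psi>\<^sub>2 = sg_conv S a b (\<lambda>r. \<psi>\<^sub>1 r - \<psi>\<^sub>2 r)"
proof -
  have "sg_conv S a b \<psi>\<^sub>1 - sg_conv S a b \<psi>\<^sub>2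
      = integral {a..b} (\<lambda>r. S (b - r) (\<psi>\<^sub>1 r) - S (b - r) (\<psi>\<^sub>2 r))"
    by (rule integral_diff[OF sg_conv_integrable[OF sg cont(1)] sg_conv_integrable[OF sg cont(2)], symmetric])
  also have "\<dots> = sg_conv S a b (\<lambda>r. \<psi>\<^sub>1 r - \<psi>\<^sub>2 r)"
    by (rule integral_cong) (simp add: C0_semigroup_diff[OF sg])
  finally show ?thesis .
qed

lemma sg_conv_increment:
  fixes S :: "real \<Rightarrow> 'x::banach \<Rightarrow> 'x"
  assumes sg: "C0_semigroup S" and "s0 \<le> t" "0 \<le> h" and cont: "continuous_on {s0..t + h} \<phi>"
  shows "sg_conv S s0 (t + h) \<phi> - sg_conv S s0 t \<phi>
       = S (t - s0) (sg_conv S s0 (s0 + h) \<phi>) + sg_conv S s0 t (\<lambda>r. \<phi> (r + h) - \<phi> r)"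
proof -
  have cont_shift: "continuous_on {s0..t} (\<lambda>r. \<phi> (r + h))"
    by (rule continuous_on_compose2[OF cont]) (use assms in \<open>auto intro!: continuous_intros\<close>)
  have cont_t: "continuous_on {s0..t} \<phi>"
    using cont by (rule continuous_on_subset) (use assms in auto)
  have "sg_conv S s0 (t + h) \<phi> = S (t - s0) (sg_conv S s0 (s0 + h) \<phi>) + sg_conv S (s0 + h) (t + h) \<phi>"
    using sg_conv_split[OF sg _ _ cont, of "s0 + h"] assms by simp
  also have "sg_conv S (s0 + h) (t + h) \<phi> = sg_conv S s0 t (\<lambda>r. \<phi> (r + h))"
    by (rule sg_conv_shift)
  finally show ?thesis
    using sg_conv_diff[OF sg cont_shift cont_t] by (simp add: algebra_simps)
qed

lemma continuous_on_Icc_if_forward_increments: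
  fixes f :: "real \<Rightarrow> 'a::metric_space"
  assumes "\<And>e. e > 0 \<Longrightarrow> \<exists>d>0. \<forall>t h. a \<le> t \<longrightarrow> 0 < h \<longrightarrow> t + h \<le> b \<longrightarrow> h < d \<longrightarrow> dist (f (t + h)) (f t) < e"
  shows "continuous_on {a..b} f"
proof (rule uniformly_continuous_imp_continuous, unfold uniformly_continuous_on_def, intro allI impI)
  fix e :: real assume "e > 0"
  then obtain d where d: "d > 0" "\<forall>t h. a \<le> t \<longrightarrow> 0 < h \<longrightarrow> t + h \<le> b \<longrightarrow> h < d \<longrightarrow> dist (f (t + h)) (f t) < e"
    using assms by blast
  have "dist (f x') (f x) < e" if "x \<in> {a..b}" "x' \<in> {a..b}" "dist x' x < d" for x x'
  proof -
    consider "x < x'" | "x = x'" | "x' < x" by linarith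
    then show ?thesis
    proof cases
      case 1 then show ?thesis using d(2)[rule_format, of x "x' - x"] that by (auto simp: dist_real_def)
    next
      case 2 then show ?thesis using \<open>e > 0\<close> by simp
    next
      case 3 then show ?thesis using d(2)[rule_format, of x' "x - x'"] that by (auto simp: dist_real_def dist_commute)
    qed
  qed
  then show "\<exists>d>0. \<forall>x\<in>{a..b}. \<forall>x'\<in>{a..b}. dist x' x < d \<longrightarrow> dist (f x') (f x) < e"
    using d(1) by blast
qed

section \<open>Subspaces on which the convolution regularizes\<close>

locale regularizing_convolution =
  fixes j :: "'y::banach \<Rightarrow> 'x::banach" and S :: "real \<Rightarrow> 'x \<Rightarrow> 'x" and \<eta> :: "real \<Rightarrow> real"
  assumes j_bounded_linear: "bounded_linear j" and j_inj: "inj j"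
    and semigroup: "C0_semigroup S"
    and invariant: "\<And>t. t \<ge> 0 \<Longrightarrow> S t ` range j \<subseteq> range j"
    and restriction_bounded:
      "\<And>t1. t1 > 0 \<Longrightarrow> bounded ((\<lambda>t. onorm (\<lambda>y. inv j (S t (j y)))) ` {0..t1})"
    and eta_pos: "\<And>\<delta>. \<delta> > 0 \<Longrightarrow> \<eta> \<delta> > 0"
    and eta_tendsto_0: "(\<eta> \<longlongrightarrow> 0) (at_right 0)"
    and smoothing_range:
      "\<And>s0 s1 \<phi>. 0 \<le> s0 \<Longrightarrow> s0 < s1 \<Longrightarrow> continuous_on {s0..s1} \<phi> \<Longrightarrow> sg_conv S s0 s1 \<phi> \<in> range j"
    and smoothing_norm:
      "\<And>s0 s1 \<phi>. 0 \<le> s0 \<Longrightarrow> s0 < s1 \<Longrightarrow> continuous_on {s0..s1} \<phi> \<Longrightarrow>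
         norm (inv j (sg_conv S s0 s1 \<phi>)) \<le> \<eta> (s1 - s0) * Sup ((\<lambda>s. norm (\<phi> s)) ` {s0..s1})"
begin

abbreviation SY :: "real \<Rightarrow> 'y \<Rightarrow> 'y" where "SY t y \<equiv> inv j (S t (j y))"

lemma j_linear: "linear j"
  using j_bounded_linear by (rule bounded_linear.linear)

lemma inv_j_0: "inv j 0 = 0"
  using inv_f_f[OF j_inj, of 0] linear_0[OF j_linear] by simp

lemma SY_bounded_linear: "t \<ge> 0 \<Longrightarrow> bounded_linear (SY t)"
  by (rule bounded_linear_restriction[OF j_bounded_linear j_inj
        C0_semigroup_bounded_linear[OF semigroup] invariant])

lemma inv_S_eq_SY: "t \<ge> 0 \<Longrightarrow> u \<in> range j \<Longrightarrow> inv j (S t u) = SY t (inv j u)"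
  by (auto simp: inv_f_f[OF j_inj])

lemma S_mem_range: "t \<ge> 0 \<Longrightarrow> u \<in> range j \<Longrightarrow> S t u \<in> range j"
  using invariant by blast

lemma SY_norm_bounded:
  obtains M where "M \<ge> 0" "\<And>t y. t \<in> {0..t1} \<Longrightarrow> norm (SY t y) \<le> M * norm y"
proof -
  have "bounded ((\<lambda>t. onorm (SY t)) ` {0..max t1 1})" by (rule restriction_bounded) simp
  then obtain M where M: "\<And>t. t \<in> {0..max t1 1} \<Longrightarrow> norm (onorm (SY t)) \<le> M"
    unfolding bounded_iff by blast
  have "norm (SY t y) \<le> M * norm y" if t: "t \<in> {0..t1}" for t y
  proof -
    have "norm (SY t y) \<le> onorm (SY t) * norm y"
      using t by (intro onorm SY_bounded_linear) simp
    also have "\<dots> \<le> M * norm y"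
      using M[of t] t by (intro mult_right_mono) (auto simp: le_max_iff_disj abs_le_iff)
    finally show ?thesis .
  qed
  moreover have "M \<ge> 0"
    using M[of 0] by (simp add: le_max_iff_disj)
  ultimately show thesis using that by blast
qed

lemma sg_conv_mem_range:
  assumes "0 \<le> a" "a \<le> b" "continuous_on {a..b} \<psi>"
  shows "sg_conv S a b \<psi> \<in> range j"
proof (cases "a = b")
  case True
  then have "sg_conv S a b \<psi> = j 0" using linear_0[OF j_linear] by simp
  then show ?thesis by blast
qed (use assms smoothing_range in auto)

lemma sg_conv_Y_norm_le:
  assumes "0 \<le> a" "a < b" "continuous_on {a..b} \<psi>" "\<And>r. r \<in> {a..b} \<Longrightarrow> norm (\<psi> r) \<le> B"
  shows "norm (inv j (sg_conv S a b \<psi>)) \<le> \<eta> (b - a) * B"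
proof -
  have "Sup ((\<lambda>s. norm (\<psi> s)) ` {a..b}) \<le> B"
    using assms by (intro cSup_least) auto
  then have "\<eta> (b - a) * Sup ((\<lambda>s. norm (\<psi> s)) ` {a..b}) \<le> \<eta> (b - a) * B"
    using eta_pos[of "b - a"] assms by (intro mult_left_mono) auto
  then show ?thesis using smoothing_norm[OF assms(1-3)] by linarith
qed

lemma sg_conv_split_Y:
  assumes "0 \<le> a" "a \<le> c" "c \<le> b" and cont: "continuous_on {a..b} \<psi>"
  shows "inv j (sg_conv S a b \<psi>) = SY (b - c) (inv j (sg_conv S a c \<psi>)) + inv j (sg_conv S c b \<psi>)"
proof -
  have ac: "sg_conv S a c \<psi> \<in> range j"
    using cont by (intro sg_conv_mem_range continuous_on_subset[OF cont]) (use assms in auto)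
  have cb: "sg_conv S c b \<psi> \<in> range j"
    using cont by (intro sg_conv_mem_range continuous_on_subset[OF cont]) (use assms in auto)
  have "inv j (sg_conv S a b \<psi>) = inv j (S (b - c) (sg_conv S a c \<psi>)) + inv j (sg_conv S c b \<psi>)"
    using sg_conv_split[OF semigroup assms(2,3) cont] S_mem_range[OF _ ac, of "b - c"] cb assms
    by (simp add: inv_linear_add[OF j_linear j_inj])
  also have "inv j (S (b - c) (sg_conv S a c \<psi>)) = SY (b - c) (inv j (sg_conv S a c \<psi>))"
    using inv_S_eq_SY[OF _ ac, of "b - c"] assms by simp
  finally show ?thesis .
qed

lemma eta_le_1_near_0:
  obtains d where "d > 0" "\<And>h. 0 < h \<Longrightarrow> h \<le> d \<Longrightarrow> \<eta> h \<le> 1"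
proof -
  have "eventually (\<lambda>h. \<eta> h < 1) (at_right 0)"
    using order_tendstoD(2)[OF eta_tendsto_0] by simp
  then obtain d where "d > 0" "\<And>h. 0 < h \<Longrightarrow> h < d \<Longrightarrow> \<eta> h < 1"
    unfolding eventually_at_right[OF zero_less_one] by auto
  then show thesis using that[of "d / 2"] by force
qed

text \<open>Cut \<open>[a, b]\<close> into pieces of length at most \<open>d\<close>, where \<open>\<eta> \<le> 1\<close>; each piece contributes at
  most \<open>(M + 1) B\<close> after being propagated by \<open>SY\<close>.\<close>
lemma sg_conv_Y_norm_le_pieces:
  assumes M0: "M \<ge> 0" and M: "\<And>t y. t \<in> {0..t1} \<Longrightarrow> norm (SY t y) \<le> M * norm y"
    and d: "d > 0" "\<And>h. 0 < h \<Longrightarrow> h \<le> d \<Longrightarrow> \<eta> h \<le> 1"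
  shows "0 \<le> a \<Longrightarrow> a \<le> b \<Longrightarrow> b \<le> t1 \<Longrightarrow> b - a \<le> real n * d \<Longrightarrow> continuous_on {a..b} \<psi> \<Longrightarrow>
    (\<And>r. r \<in> {a..b} \<Longrightarrow> norm (\<psi> r) \<le> B) \<Longrightarrow> norm (inv j (sg_conv S a b \<psi>)) \<le> real n * (M + 1) * B"
proof (induction n arbitrary: a)
  case 0 then show ?case using d(1) by (simp add: inv_j_0)
next
  case (Suc n)
  have "norm (\<psi> a) \<le> B" using Suc.prems(6)[of a] Suc.prems(2) by simp
  then have B: "B \<ge> 0" using norm_ge_zero order_trans by blast
  define c where "c = min b (a + d)"
  have c: "a \<le> c" "c \<le> b" "c - a \<le> d" "b - c \<le> real n * d"
    using Suc.prems(2,4) d(1) by (auto simp: c_def min_def algebra_simps)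
  have "norm (inv j (sg_conv S a c \<psi>)) \<le> B"
  proof (cases "a = c")
    case False
    have "norm (inv j (sg_conv S a c \<psi>)) \<le> \<eta> (c - a) * B"
      using Suc.prems c False
      by (intro sg_conv_Y_norm_le continuous_on_subset[OF Suc.prems(5)]) auto
    also have "\<dots> \<le> B"
      using d(2)[of "c - a"] eta_pos[of "c - a"] c False B by (intro mult_left_le_one_le) auto
    finally show ?thesis .
  qed (simp add: B inv_j_0)
  moreover have "norm (inv j (sg_conv S c b \<psi>)) \<le> real n * (M + 1) * B"
    using Suc.prems c by (intro Suc.IH continuous_on_subset[OF Suc.prems(5)]) auto
  moreover have "norm (SY (b - c) (inv j (sg_conv S a c \<psi>))) \<le> M * norm (inv j (sg_conv S a c \<psi>))"
    using M Suc.prems c by simp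
  ultimately have "norm (inv j (sg_conv S a b \<psi>)) \<le> M * B + real n * (M + 1) * B"
    unfolding sg_conv_split_Y[OF Suc.prems(1) c(1,2) Suc.prems(5)]
    by (smt (verit) M0 mult_left_mono norm_triangle_ineq)
  also have "\<dots> \<le> real (Suc n) * (M + 1) * B" using B by (simp add: algebra_simps)
  finally show ?case .
qed

lemma sg_conv_Y_norm_bounded:
  obtains C where "C \<ge> 0" "\<And>a b \<psi> B. 0 \<le> a \<Longrightarrow> a \<le> b \<Longrightarrow> b \<le> t1 \<Longrightarrow> continuous_on {a..b} \<psi> \<Longrightarrow>
      (\<And>r. r \<in> {a..b} \<Longrightarrow> norm (\<psi> r) \<le> B) \<Longrightarrow> norm (inv j (sg_conv S a b \<psi>)) \<le> C * B"
proof -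
  obtain M where M0: "M \<ge> 0" and M: "\<And>t y. t \<in> {0..t1} \<Longrightarrow> norm (SY t y) \<le> M * norm y"
    using SY_norm_bounded by blast
  obtain d where d: "d > 0" "\<And>h. 0 < h \<Longrightarrow> h \<le> d \<Longrightarrow> \<eta> h \<le> 1"
    using eta_le_1_near_0 by blast
  obtain N :: nat where "t1 / d < real N" using reals_Archimedean2 by blast
  then have N: "t1 \<le> real N * d" using d(1) by (simp add: field_simps)
  show thesis
  proof (rule that[of "real N * (M + 1)"])
    show "0 \<le> real N * (M + 1)" using M0 by simp
    fix a b B and \<psi> :: "real \<Rightarrow> 'x"
    assume "0 \<le> a" "a \<le> b" "b \<le> t1" "continuous_on {a..b} \<psi>"
      "\<And>r. r \<in> {a..b} \<Longrightarrow> norm (\<psi> r) \<le> B"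
    then show "norm (inv j (sg_conv S a b \<psi>)) \<le> real N * (M + 1) * B"
      using N by (intro sg_conv_Y_norm_le_pieces[OF M0 M d]) auto
  qed
qed

lemma sg_conv_increment_Y:
  assumes "0 \<le> s0" "s0 \<le> t" "0 \<le> h" and cont: "continuous_on {s0..t + h} \<phi>"
  shows "inv j (sg_conv S s0 (t + h) \<phi>) - inv j (sg_conv S s0 t \<phi>)
       = SY (t - s0) (inv j (sg_conv S s0 (s0 + h) \<phi>)) + inv j (sg_conv S s0 t (\<lambda>r. \<phi> (r + h) - \<phi> r))"
proof -
  have cont_shift: "continuous_on {s0..t} (\<lambda>r. \<phi> (r + h) - \<phi> r)"
  proof (intro continuous_on_diff continuous_on_subset[OF cont])
    show "continuous_on {s0..t} (\<lambda>r. \<phi> (r + h))"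
      by (rule continuous_on_compose2[OF cont]) (use assms in \<open>auto intro!: continuous_intros\<close>)
  qed (use assms in auto)
  have r1: "sg_conv S s0 (t + h) \<phi> \<in> range j"
    by (rule sg_conv_mem_range[OF _ _ cont]) (use assms in auto)
  have r2: "sg_conv S s0 t \<phi> \<in> range j"
    by (intro sg_conv_mem_range continuous_on_subset[OF cont]) (use assms in auto)
  have r3: "sg_conv S s0 (s0 + h) \<phi> \<in> range j"
    by (intro sg_conv_mem_range continuous_on_subset[OF cont]) (use assms in auto)
  have r4: "sg_conv S s0 t (\<lambda>r. \<phi> (r + h) - \<phi> r) \<in> range j"
    by (rule sg_conv_mem_range[OF _ _ cont_shift]) (use assms in auto)
  have "inv j (sg_conv S s0 (t + h) \<phi>) - inv j (sg_conv S s0 t \<phi>)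
      = inv j (S (t - s0) (sg_conv S s0 (s0 + h) \<phi>)) + inv j (sg_conv S s0 t (\<lambda>r. \<phi> (r + h) - \<phi> r))"
    using sg_conv_increment[OF semigroup assms(2,3) cont] r1 r2 r4 S_mem_range[OF _ r3, of "t - s0"] assms
    by (simp add: inv_linear_diff[OF j_linear j_inj, symmetric] inv_linear_add[OF j_linear j_inj, symmetric])
  also have "inv j (S (t - s0) (sg_conv S s0 (s0 + h) \<phi>)) = SY (t - s0) (inv j (sg_conv S s0 (s0 + h) \<phi>))"
    using inv_S_eq_SY[OF _ r3, of "t - s0"] assms by simp
  finally show ?thesis .
qed

lemma sg_conv_Y_increment_bounded:
  assumes "0 \<le> s0" and cont: "continuous_on {s0..s1} \<phi>"
  obtains M C where "M \<ge> 0" "C \<ge> 0"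
    "\<And>t h B. s0 \<le> t \<Longrightarrow> 0 < h \<Longrightarrow> t + h \<le> s1 \<Longrightarrow>
      (\<And>r. r \<in> {s0..t} \<Longrightarrow> norm (\<phi> (r + h) - \<phi> r) \<le> B) \<Longrightarrow>
      norm (inv j (sg_conv S s0 (t + h) \<phi>) - inv j (sg_conv S s0 t \<phi>)) \<le> M * \<eta> h + C * B"
proof -
  obtain M where M0: "M \<ge> 0" and M: "\<And>t y. t \<in> {0..s1} \<Longrightarrow> norm (SY t y) \<le> M * norm y"
    using SY_norm_bounded by blast
  obtain C where C0: "C \<ge> 0" and C: "\<And>a b \<psi> B. 0 \<le> a \<Longrightarrow> a \<le> b \<Longrightarrow> b \<le> s1 \<Longrightarrow>
      continuous_on {a..b} \<psi> \<Longrightarrow> (\<And>r. r \<in> {a..b} \<Longrightarrow> norm (\<psi> r) \<le> B) \<Longrightarrow>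
      norm (inv j (sg_conv S a b \<psi>)) \<le> C * B"
    using sg_conv_Y_norm_bounded by blast
  have "bounded (\<phi> ` {s0..s1})"
    by (intro compact_imp_bounded compact_continuous_image cont compact_Icc)
  then obtain \<Phi> where \<Phi>0: "\<Phi> > 0" and \<Phi>: "\<And>r. r \<in> {s0..s1} \<Longrightarrow> norm (\<phi> r) \<le> \<Phi>"
    unfolding bounded_pos by auto
  show thesis
  proof (rule that[of "M * \<Phi>" C])
    fix t h B
    assume t: "s0 \<le> t" "0 < h" "t + h \<le> s1"
      and B: "\<And>r. r \<in> {s0..t} \<Longrightarrow> norm (\<phi> (r + h) - \<phi> r) \<le> B"
    have "norm (inv j (sg_conv S s0 (s0 + h) \<phi>)) \<le> \<eta> (s0 + h - s0) * \<Phi>"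
      using t \<Phi> by (intro sg_conv_Y_norm_le continuous_on_subset[OF cont] \<open>0 \<le> s0\<close>) auto
    then have "M * norm (inv j (sg_conv S s0 (s0 + h) \<phi>)) \<le> M * (\<eta> h * \<Phi>)"
      using M0 by (simp add: mult_left_mono)
    moreover have "norm (SY (t - s0) (inv j (sg_conv S s0 (s0 + h) \<phi>)))
        \<le> M * norm (inv j (sg_conv S s0 (s0 + h) \<phi>))"
      using M[of "t - s0"] t \<open>0 \<le> s0\<close> by simp
    moreover have "norm (inv j (sg_conv S s0 t (\<lambda>r. \<phi> (r + h) - \<phi> r))) \<le> C * B"
    proof (rule C)
      show "continuous_on {s0..t} (\<lambda>r. \<phi> (r + h) - \<phi> r)"
      proof (intro continuous_on_diff continuous_on_subset[OF cont])
        show "continuous_on {s0..t} (\<lambda>r. \<phi> (r + h))"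
          by (rule continuous_on_compose2[OF cont]) (use t in \<open>auto intro!: continuous_intros\<close>)
      qed (use t in auto)
    qed (use t \<open>0 \<le> s0\<close> B in auto)
    moreover have cont_th: "continuous_on {s0..t + h} \<phi>"
      using cont by (rule continuous_on_subset) (use t in auto)
    ultimately have "norm (inv j (sg_conv S s0 (t + h) \<phi>) - inv j (sg_conv S s0 t \<phi>))
        \<le> M * (\<eta> h * \<Phi>) + C * B"
      unfolding sg_conv_increment_Y[OF \<open>0 \<le> s0\<close> t(1) less_imp_le[OF t(2)] cont_th]
      by (smt (verit) norm_triangle_ineq)
    then show "norm (inv j (sg_conv S s0 (t + h) \<phi>) - inv j (sg_conv S s0 t \<phi>))
        \<le> M * \<Phi> * \<eta> h + C * B"
      by (simp add: algebra_simps)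
  qed (use M0 C0 \<Phi>0 in auto)
qed

theorem sg_conv_Y_continuous:
  assumes "0 \<le> s0" and cont: "continuous_on {s0..s1} \<phi>"
  shows "continuous_on {s0..s1} (\<lambda>t. inv j (sg_conv S s0 t \<phi>))"
proof (rule continuous_on_Icc_if_forward_increments)
  fix e :: real assume "e > 0"
  obtain M C where "M \<ge> 0" and C0: "C \<ge> 0" and increment: "\<And>t h B. s0 \<le> t \<Longrightarrow> 0 < h \<Longrightarrow> t + h \<le> s1 \<Longrightarrow>
      (\<And>r. r \<in> {s0..t} \<Longrightarrow> norm (\<phi> (r + h) - \<phi> r) \<le> B) \<Longrightarrow>
      norm (inv j (sg_conv S s0 (t + h) \<phi>) - inv j (sg_conv S s0 t \<phi>)) \<le> M * \<eta> h + C * B"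
    using sg_conv_Y_increment_bounded[OF assms] by blast
  have "((\<lambda>h. M * \<eta> h) \<longlongrightarrow> M * 0) (at_right 0)"
    by (intro tendsto_intros eta_tendsto_0)
  then have "eventually (\<lambda>h. M * \<eta> h < e / 2) (at_right 0)"
    by (rule order_tendstoD(2)) (use \<open>e > 0\<close> in simp)
  then obtain d1 where d1: "d1 > 0" "\<And>h. 0 < h \<Longrightarrow> h < d1 \<Longrightarrow> M * \<eta> h < e / 2"
    unfolding eventually_at_right[OF zero_less_one] by auto
  define B where "B = e / (2 * (C + 1))"
  have B: "B > 0" "C * B < e / 2"
  proof -
    show "B > 0" using \<open>e > 0\<close> C0 by (simp add: B_def)
    have "C * B = e / 2 * (C / (C + 1))" by (simp add: B_def)
    also have "\<dots> < e / 2 * 1" using \<open>e > 0\<close> C0 by (intro mult_strict_left_mono) auto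
    finally show "C * B < e / 2" by simp
  qed
  have "uniformly_continuous_on {s0..s1} \<phi>"
    by (rule compact_uniformly_continuous[OF cont compact_Icc])
  then obtain d2 where d2: "d2 > 0"
      "\<forall>r\<in>{s0..s1}. \<forall>r'\<in>{s0..s1}. dist r' r < d2 \<longrightarrow> dist (\<phi> r') (\<phi> r) < B"
    using B(1) unfolding uniformly_continuous_on_def by blast
  have "dist (inv j (sg_conv S s0 (t + h) \<phi>)) (inv j (sg_conv S s0 t \<phi>)) < e"
    if t: "s0 \<le> t" "0 < h" "t + h \<le> s1" "h < min d1 d2" for t h
  proof -
    have "norm (\<phi> (r + h) - \<phi> r) \<le> B" if "r \<in> {s0..t}" for r
      using d2(2)[rule_format, of r "r + h"] that t by (auto simp: dist_norm)
    then have "norm (inv j (sg_conv S s0 (t + h) \<phi>) - inv j (sg_conv S s0 t \<phi>)) \<le> M * \<eta> h + C * B"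
      using t by (intro increment) auto
    then show ?thesis using d1(2)[of h] t B(2) by (simp add: dist_norm)
  qed
  then show "\<exists>d>0. \<forall>t h. s0 \<le> t \<longrightarrow> 0 < h \<longrightarrow> t + h \<le> s1 \<longrightarrow> h < d \<longrightarrow>
      dist (inv j (sg_conv S s0 (t + h) \<phi>)) (inv j (sg_conv S s0 t \<phi>)) < e"
    using d1(1) d2(1) by (intro exI[of _ "min d1 d2"]) auto
qed

end

theorem lemma3p6:
  fixes j :: "'y::banach \<Rightarrow> 'x::banach"
    and S :: "real \<Rightarrow> 'x \<Rightarrow> 'x"
    and D :: "'x set" and G :: "'x \<Rightarrow> 'x"
  assumes emb_lin: "bounded_linear j" and emb_inj: "inj j"
    and gen: "generates_C0 D G S"
    and inv_Y: "\<And>t. t \<ge> 0 \<Longrightarrow> S t ` range j \<subseteq> range j"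
  shows
    "(\<forall>t\<ge>0. bounded_linear (\<lambda>y. inv j (S t (j y))))
     \<and>
     ((\<forall>y. continuous_on {0..} (\<lambda>t. inv j (S t (j y)))) \<longrightarrow>
        (\<forall>t1>0. bounded ((\<lambda>t. onorm (\<lambda>y. inv j (S t (j y)))) ` {0..t1})))
     \<and>
     (((\<forall>t1>0. bounded ((\<lambda>t. onorm (\<lambda>y. inv j (S t (j y)))) ` {0..t1})) \<and>
       (\<exists>\<eta>::real \<Rightarrow> real. (\<forall>\<delta>>0. \<eta> \<delta> > 0) \<and> (\<eta> \<longlongrightarrow> 0) (at_right 0) \<and>
          (\<forall>s0 s1 (\<phi>::real \<Rightarrow> 'x). 0 \<le> s0 \<and> s0 < s1 \<and> continuous_on {s0..s1} \<phi> \<longrightarrow>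
              integral {s0..s1} (\<lambda>s. S (s1 - s) (\<phi> s)) \<in> range j \<and>
              norm (inv j (integral {s0..s1} (\<lambda>s. S (s1 - s) (\<phi> s))))
                \<le> \<eta> (s1 - s0) * Sup ((\<lambda>s. norm (\<phi> s)) ` {s0..s1}))))
      \<longrightarrow>
      (\<forall>s0 s1 (\<phi>::real \<Rightarrow> 'x). 0 \<le> s0 \<and> s0 < s1 \<and> continuous_on {s0..s1} \<phi> \<longrightarrow>
          (\<forall>t\<in>{s0..s1}. integral {s0..t} (\<lambda>s. S (t - s) (\<phi> s)) \<in> range j) \<and>
          continuous_on {s0..s1} (\<lambda>t. inv j (integral {s0..t} (\<lambda>s. S (t - s) (\<phi> s))))))"
proof -
  have sg: "C0_semigroup S" using gen by (simp add: generates_C0_def)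
  have i: "bounded_linear (\<lambda>y. inv j (S t (j y)))" if "t \<ge> 0" for t
    by (rule bounded_linear_restriction[OF emb_lin emb_inj
          C0_semigroup_bounded_linear[OF sg that] inv_Y[OF that]])
  have ii: "bounded ((\<lambda>t. onorm (\<lambda>y. inv j (S t (j y)))) ` {0..t1})"
    if "\<And>y. continuous_on {0..} (\<lambda>t. inv j (S t (j y)))" for t1
    using i by (intro strongly_continuous_onorm_bounded continuous_on_subset[OF that]) auto
  have iii: "(\<forall>t\<in>{s0..s1}. sg_conv S s0 t \<phi> \<in> range j)
      \<and> continuous_on {s0..s1} (\<lambda>t. inv j (sg_conv S s0 t \<phi>))"
    if "\<forall>t1>0. bounded ((\<lambda>t. onorm (\<lambda>y. inv j (S t (j y)))) ` {0..t1})"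
      and "\<forall>\<delta>>0. \<eta> \<delta> > 0" and "(\<eta> \<longlongrightarrow> 0) (at_right 0)"
      and "\<forall>s0 s1 (\<phi>::real \<Rightarrow> 'x). 0 \<le> s0 \<and> s0 < s1 \<and> continuous_on {s0..s1} \<phi> \<longrightarrow>
              sg_conv S s0 s1 \<phi> \<in> range j \<and>
              norm (inv j (sg_conv S s0 s1 \<phi>)) \<le> \<eta> (s1 - s0) * Sup ((\<lambda>s. norm (\<phi> s)) ` {s0..s1})"
      and "0 \<le> s0" "continuous_on {s0..s1} \<phi>" for \<eta> s0 s1 \<phi>
  proof -
    interpret regularizing_convolution j S \<eta>
      by (rule regularizing_convolution.intro[OF emb_lin emb_inj sg inv_Y]) (use that(1-4) in auto)
    show ?thesis
    proof
      show "\<forall>t\<in>{s0..s1}. sg_conv S s0 t \<phi> \<in> range j"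
        using that(5) by (auto intro!: sg_conv_mem_range continuous_on_subset[OF that(6)])
      show "continuous_on {s0..s1} (\<lambda>t. inv j (sg_conv S s0 t \<phi>))"
        by (rule sg_conv_Y_continuous[OF that(5,6)])
    qed
  qed
  show ?thesis
    using i ii iii by blast
qed

end
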